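(* Let $u(t,x)$ be a solution, for $t\ge0$, of $$\partial_tu=D_M(t)\partial_{xx}u-d_M(t)u+R\big(t,u(t-\tau(t),\cdot)\big)(x).$$ Then $$\int_0^Tk_I(t,s,\cdot)*b(s,u(s,\cdot))\,ds\equiv\int_0^Tk_I(t,s,\cdot)*R\big(s,u(s-\tau(s),\cdot)\big)\,ds,\qquad t>T.$$ If $u(s,x)\equiv u(s)$ is independent of $x$, this reduces to $$\int_0^Te^{-\int_s^td_I(\varsigma)d\varsigma}b(s,u(s))\,ds=\int_0^Te^{-\int_s^td_I(\varsigma)d\varsigma}R\big(s,u(s-\tau(s))\big)\,ds.$$
   Context: Setting: $T>0$; $D_M,D_I\ge0$, $d_M,d_I>0$, $\tau>0$, $p\ge0$ are $C^1$ $T$-periodic functions with $\tau'<1$; $h\ge0$ is $C^1$; $b(t,u)=p(t)h(u)$; there are $0<\alpha\le\beta<t_\alpha\le t_\beta<T$ with $t_\alpha-\tau(t_\alpha)=\alpha$, $t_\beta-\tau(t_\beta)=\beta$ and $p=0$ on $[0,\alpha]\cup[\beta,T]$ (so $b(t,\cdot)\equiv0$ for $t\in[0,T]\setminus[\alpha,\beta]$). $k_I(t,s,x)=(4\pi\int_s^tD_I)^{-1/2}\exp(-x^2/(4\int_s^tD_I)-\int_s^td_I)$ is the Green function of $\partial_t\rho=D_I(t)\rho_{xx}-d_I(t)\rho$ (with $k_I(t,t,\cdot)=\delta_0$), and $k_M$ is defined analogously with $D_M,d_M$. For a bounded function $\phi$, $R(t,\phi)(x)=(1-\tau'(t))\big(k_I(t,t-\tau(t),\cdot)*b(t-\tau(t),\phi(\cdot))\big)(x)$,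 and $R(t,\cdot)\equiv0$ for $t\in[0,T]\setminus[t_\alpha,t_\beta]$. Convolution $*$ is in $x$; for constants, $k_I(t,s,\cdot)*c=e^{-\int_s^td_I}c$. *)

theory Defs
  imports "HOL-Analysis.Analysis"
begin

definition C1_periodic :: "real \<Rightarrow> (real \<Rightarrow> real) \<Rightarrow> bool" where
  "C1_periodic T f \<longleftrightarrow> f C1_differentiable_on UNIV \<and> (\<forall>t. f (t + T) = f t)"

text \<open>Action of the Green function k(t,s,.) of rho_t = D(t) rho_xx - d(t) rho by
  convolution in x, for s \<le> t. When the diffusion integral over [s,t] vanishes
  (in particular when s = t) the kernel is exp(-int d) times the Dirac mass.\<close>
definition heat_conv ::
  "(real \<Rightarrow> real) \<Rightarrow> (real \<Rightarrow> real) \<Rightarrow> real \<Rightarrow> real \<Rightarrow> (real \<Rightarrow> real) \<Rightarrow> real \<Rightarrow> real" where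
  "heat_conv D d t s \<phi> x =
     (let \<sigma> = integral {s..t} D; \<mu> = integral {s..t} d in
      if \<sigma> = 0 then exp (- \<mu>) * \<phi> x
      else integral UNIV (\<lambda>y. (4 * pi * \<sigma>) powr (-1/2)
                                 * exp (- (x - y)\<^sup>2 / (4 * \<sigma>) - \<mu>) * \<phi> y))"

definition bfun :: "(real \<Rightarrow> real) \<Rightarrow> (real \<Rightarrow> real) \<Rightarrow> real \<Rightarrow> real \<Rightarrow> real" where
  "bfun p h t v = p t * h v"

definition Rop ::
  "(real \<Rightarrow> real) \<Rightarrow> (real \<Rightarrow> real) \<Rightarrow> (real \<Rightarrow> real) \<Rightarrow> (real \<Rightarrow> real) \<Rightarrow> (real \<Rightarrow> real)
   \<Rightarrow> real \<Rightarrow> (real \<Rightarrow> real) \<Rightarrow> real \<Rightarrow> real" where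
  "Rop DI dI \<tau> p h t \<phi> x =
     (1 - deriv \<tau> t) * heat_conv DI dI t (t - \<tau> t) (\<lambda>y. bfun p h (t - \<tau> t) (\<phi> y)) x"

definition pde_solution ::
  "(real \<Rightarrow> real) \<Rightarrow> (real \<Rightarrow> real) \<Rightarrow> (real \<Rightarrow> real)
   \<Rightarrow> (real \<Rightarrow> (real \<Rightarrow> real) \<Rightarrow> real \<Rightarrow> real) \<Rightarrow> (real \<Rightarrow> real \<Rightarrow> real) \<Rightarrow> bool" where
  "pde_solution DM dM \<tau> R u \<longleftrightarrow>
     continuous_on ({0..} \<times> UNIV) (\<lambda>(t, x). u t x) \<and>
     (\<forall>S. \<exists>B. \<forall>t\<in>{0..S}. \<forall>x. \<bar>u t x\<bar> \<le> B) \<and>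
     (\<forall>t>0. \<forall>x.
        (\<forall>y. (\<lambda>z. u t z) differentiable (at y)) \<and>
        deriv (\<lambda>z. u t z) differentiable (at x) \<and>
        ((\<lambda>s. u s x) has_real_derivative
           (DM t * deriv (deriv (\<lambda>z. u t z)) x - dM t * u t x + R t (u (t - \<tau> t)) x)) (at t))"

end

theory Submission
  imports Defs "HOL-Probability.Probability"
begin

(* Substitute r = s - tau(s) in the right-hand integral. By the semigroup property
   k_I(t,s,.) * k_I(s,r,.) = k_I(t,r,.) the integrand becomes (1 - tau'(s)) k_I(t,r,.) * b(r,u(r,.)),
   and 1 - tau'(s) > 0 is exactly the Jacobian of the substitution. The delay map sends
   [t_alpha, t_beta] increasingly onto [alpha, beta], and by periodicity of p the source vanishes at
   every other delayed time s - tau(s), s in [0,T]; so both sides equal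
   int_alpha^beta k_I(t,r,.) * b(r,u(r,.)) dr. Only continuity and boundedness of u enter, not the
   equation it solves. Writing the kernel as a Gaussian of variance 2 int D_I turns the semigroup
   property into the convolution rule for normal densities. *)

section \<open>Gaussian densities\<close>

lemma heat_kernel_eq_normal_density:
  fixes \<sigma> :: real
  assumes "\<sigma> > 0"
  shows "(4 * pi * \<sigma>) powr (-1/2) * exp (- (x - y)\<^sup>2 / (4 * \<sigma>) - \<mu>)
         = exp (-\<mu>) * normal_density x (sqrt (2*\<sigma>)) y"
proof -
  have sq: "(sqrt (2*\<sigma>))\<^sup>2 = 2*\<sigma>" using assms by simp
  have "(4 * pi * \<sigma>) powr (-1/2) = 1 / sqrt (2 * pi * (sqrt (2*\<sigma>))\<^sup>2)"
    using assms unfolding sq by (simp add: powr_minus_divide powr_half_sqrt[symmetric] mult.assoc)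
  moreover have "exp (- (x - y)\<^sup>2 / (4 * \<sigma>) - \<mu>) = exp (-\<mu>) * exp (-(y - x)\<^sup>2/ (2 * (sqrt (2*\<sigma>))\<^sup>2))"
  proof -
    have "- (x - y)\<^sup>2 / (4 * \<sigma>) - \<mu> = -\<mu> + (-(y - x)\<^sup>2/ (2 * (sqrt (2*\<sigma>))\<^sup>2))"
      unfolding sq by (simp add: power2_commute)
    then show ?thesis by (simp only: exp_add)
  qed
  ultimately show ?thesis unfolding normal_density_def by simp
qed

lemma integrable_normal_density_times_bounded:
  fixes g :: "real \<Rightarrow> real"
  assumes [measurable]: "g \<in> borel_measurable borel" and "\<forall>y. \<bar>g y\<bar> \<le> B" and "c > 0"
  shows "integrable lborel (\<lambda>y. normal_density x c y * g y)"
proof (rule Bochner_Integration.integrable_bound)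
  show "integrable lborel (\<lambda>y. B * normal_density x c y)"
    using \<open>c > 0\<close> by (intro integrable_mult_right integrable_normal_density)
  show "AE y in lborel. norm (normal_density x c y * g y) \<le> norm (B * normal_density x c y)"
  proof
    fix y
    have "\<bar>g y\<bar> \<le> B" "0 \<le> B" using assms(2) abs_ge_zero order_trans by blast+
    then show "norm (normal_density x c y * g y) \<le> norm (B * normal_density x c y)"
      by (simp add: abs_mult mult.commute mult_right_mono normal_density_nonneg)
  qed
qed simp

lemma abs_integral_normal_density_times_bounded_le:
  fixes g :: "real \<Rightarrow> real"
  assumes [measurable]: "g \<in> borel_measurable borel" and "\<forall>y. \<bar>g y\<bar> \<le> B" and "c > 0"
  shows "\<bar>\<integral>y. normal_density x c y * g y \<partial>lborel\<bar> \<le> B"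
proof -
  have "\<bar>\<integral>y. normal_density x c y * g y \<partial>lborel\<bar> \<le> (\<integral>y. \<bar>normal_density x c y * g y\<bar> \<partial>lborel)"
    by (rule integral_abs_bound)
  also have "\<dots> \<le> (\<integral>y. B * normal_density x c y \<partial>lborel)"
    using assms by (intro integral_mono integrable_normal_density_times_bounded integrable_abs
        integrable_mult_right integrable_normal_density)
      (auto simp: abs_mult mult.commute intro!: mult_right_mono)
  also have "\<dots> = B" using \<open>c > 0\<close> by simp
  finally show ?thesis .
qed

lemma measurable_normal_density [measurable]:
  "(\<lambda>p. normal_density (f p) \<sigma> (g p)) \<in> borel_measurable M"
  if [measurable]: "f \<in> borel_measurable M" "g \<in> borel_measurable M"
  unfolding normal_density_def by measurable

lemma nn_integral_normal_density: "c > 0 \<Longrightarrow> (\<integral>\<^sup>+y. ennreal (normal_density x c y) \<partial>lborel) = 1"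
  by (subst nn_integral_eq_integral) auto

lemma normal_density_shift: "normal_density \<mu> \<sigma> v = normal_density 0 \<sigma> (v - \<mu>)"
  unfolding normal_density_def by simp

lemma nn_integral_normal_density_chain:
  assumes "a > 0" "b > 0"
  shows "(\<integral>\<^sup>+y. ennreal (normal_density x a y * normal_density y b z) \<partial>lborel)
         = ennreal (normal_density x (sqrt (a\<^sup>2 + b\<^sup>2)) z)"
proof -
  have "(\<integral>\<^sup>+y. ennreal (normal_density x a y * normal_density y b z) \<partial>lborel)
      = (\<integral>\<^sup>+y. ennreal (normal_density x a (x + 1 * y) * normal_density (x + 1 * y) b z) \<partial>lborel)"
    using nn_integral_real_affine[where c=1 and t=x
        and f="\<lambda>y. ennreal (normal_density x a y * normal_density y b z)"] by simp
  also have "\<dots> = (\<integral>\<^sup>+y. ennreal (normal_density 0 b ((z - x) - y) * normal_density 0 a y) \<partial>lborel)"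
  proof (intro nn_integral_cong)
    fix y
    have "normal_density (x + 1 * y) b z = normal_density 0 b ((z - x) - y)"
      by (subst normal_density_shift) (simp add: diff_diff_eq)
    then show "ennreal (normal_density x a (x + 1 * y) * normal_density (x + 1 * y) b z)
        = ennreal (normal_density 0 b ((z - x) - y) * normal_density 0 a y)"
      by (simp add: normal_density_shift[of x] mult.commute)
  qed
  also have "\<dots> = ennreal (normal_density 0 (sqrt (b\<^sup>2 + a\<^sup>2)) (z - x))"
    using conv_normal_density_zero_mean[OF assms(2,1)] by (rule fun_cong)
  also have "\<dots> = ennreal (normal_density x (sqrt (a\<^sup>2 + b\<^sup>2)) z)"
    by (simp add: normal_density_shift[of x] add.commute)
  finally show ?thesis .
qed

lemma integral_normal_density_chain:
  assumes "a > 0" "b > 0"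
  shows "(\<integral>y. normal_density x a y * normal_density y b z \<partial>lborel)
         = normal_density x (sqrt (a\<^sup>2 + b\<^sup>2)) z"
  by (subst integral_eq_nn_integral) (auto simp: nn_integral_normal_density_chain[OF assms])

lemma integrable_normal_density_chain:
  assumes "a > 0" "b > 0"
  shows "integrable (lborel \<Otimes>\<^sub>M lborel) (\<lambda>(y,z). normal_density x a y * normal_density y b z)"
proof -
  have "(\<integral>\<^sup>+p. ennreal (norm (normal_density x a (fst p) * normal_density (fst p) b (snd p)))
          \<partial>(lborel \<Otimes>\<^sub>M lborel))
      = (\<integral>\<^sup>+y. ennreal (normal_density x a y) * (\<integral>\<^sup>+z. ennreal (normal_density y b z) \<partial>lborel) \<partial>lborel)"
    by (subst lborel.nn_integral_fst[symmetric])
      (auto simp: abs_mult ennreal_mult' nn_integral_cmult[symmetric] intro!: nn_integral_cong)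
  also have "\<dots> = 1"
    using assms by (simp add: nn_integral_normal_density)
  finally show ?thesis
    unfolding integrable_iff_bounded by (simp add: case_prod_beta)
qed

lemma integral_normal_density_semigroup:
  fixes g :: "real \<Rightarrow> real"
  assumes a: "a > 0" and b: "b > 0"
    and [measurable]: "g \<in> borel_measurable borel" and gB: "\<forall>y. \<bar>g y\<bar> \<le> B"
  shows "(\<integral>y. normal_density x a y * (\<integral>z. normal_density y b z * g z \<partial>lborel) \<partial>lborel)
       = (\<integral>z. normal_density x (sqrt (a\<^sup>2 + b\<^sup>2)) z * g z \<partial>lborel)"
proof -
  define H where "H y z = normal_density x a y * (normal_density y b z * g z)" for y z
  have "integrable (lborel \<Otimes>\<^sub>M lborel) (\<lambda>(y,z). H y z)"
  proof (rule Bochner_Integration.integrable_bound)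
    show "integrable (lborel \<Otimes>\<^sub>M lborel)
        (\<lambda>p. B * (case p of (y, z) \<Rightarrow> normal_density x a y * normal_density y b z))"
      using integrable_normal_density_chain[OF a b] by (rule integrable_mult_right)
    show "(\<lambda>(y,z). H y z) \<in> borel_measurable (lborel \<Otimes>\<^sub>M lborel)"
      unfolding H_def by measurable
    have "0 \<le> B" using gB by (meson abs_ge_zero order_trans)
    then show "AE p in lborel \<Otimes>\<^sub>M lborel. norm ((\<lambda>(y,z). H y z) p)
        \<le> norm (B * (case p of (y, z) \<Rightarrow> normal_density x a y * normal_density y b z))"
      using gB unfolding H_def
      by (intro AE_I2) (auto simp: abs_mult mult.commute mult.left_commute
          intro!: mult_right_mono normal_density_nonneg)
  qed
  then have "(\<integral>y. (\<integral>z. H y z \<partial>lborel) \<partial>lborel) = (\<integral>z. (\<integral>y. H y z \<partial>lborel) \<partial>lborel)"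
    by (simp add: lborel_pair.Fubini_integral)
  also have "\<dots> = (\<integral>z. g z * (\<integral>y. normal_density x a y * normal_density y b z \<partial>lborel) \<partial>lborel)"
    unfolding H_def by (intro Bochner_Integration.integral_cong refl)
      (simp flip: integral_mult_left_zero add: mult.commute mult.left_commute)
  also have "\<dots> = (\<integral>z. normal_density x (sqrt (a\<^sup>2 + b\<^sup>2)) z * g z \<partial>lborel)"
    by (simp only: integral_normal_density_chain[OF a b]) (simp add: mult.commute)
  finally show ?thesis
    unfolding H_def by simp
qed

lemma integral_normal_density_affine:
  fixes g :: "real \<Rightarrow> real"
  assumes "c > 0"
  shows "(\<integral>y. normal_density x c y * g y \<partial>lborel) = (\<integral>z. std_normal_density z * g (x + c * z) \<partial>lborel)"
proof -
  have "(\<integral>y. normal_density x c y * g y \<partial>lborel)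
      = \<bar>c\<bar> *\<^sub>R (\<integral>z. normal_density x c (x + c * z) * g (x + c * z) \<partial>lborel)"
    using assms by (intro lborel_integral_real_affine) simp
  also have "\<dots> = (\<integral>z. c * normal_density x c (x + c * z) * g (x + c * z) \<partial>lborel)"
    using assms by (simp add: mult.assoc)
  also have "\<dots> = (\<integral>z. std_normal_density z * g (x + c * z) \<partial>lborel)"
  proof (intro Bochner_Integration.integral_cong refl)
    fix z
    have "c * normal_density x c (x + c * z) = std_normal_density z"
      using assms unfolding normal_density_def
      by (simp add: power_mult_distrib real_sqrt_mult field_simps)
    then show "c * normal_density x c (x + c * z) * g (x + c * z) = std_normal_density z * g (x + c * z)"
      by simp
  qed
  finally show ?thesis .
qed

section \<open>The heat flow\<close>

(* Solution at time \<sigma> of \<rho>_t = \<rho>_xx with initial datum g. *)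
definition heat_flow :: "real \<Rightarrow> (real \<Rightarrow> real) \<Rightarrow> real \<Rightarrow> real" where
  "heat_flow \<sigma> g x =
     (if \<sigma> = 0 then g x else \<integral>y. normal_density x (sqrt (2 * \<sigma>)) y * g y \<partial>lborel)"

lemma heat_flow_0 [simp]: "heat_flow 0 g = g"
  by (simp add: heat_flow_def fun_eq_iff)

lemma measurable_heat_flow [measurable]:
  "g \<in> borel_measurable borel \<Longrightarrow> heat_flow \<sigma> g \<in> borel_measurable borel"
  by (cases "\<sigma> = 0") (simp_all add: heat_flow_def[abs_def])

lemma abs_heat_flow_le:
  assumes "\<sigma> \<ge> 0" "g \<in> borel_measurable borel" "\<forall>y. \<bar>g y\<bar> \<le> B"
  shows "\<bar>heat_flow \<sigma> g x\<bar> \<le> B"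
  using assms abs_integral_normal_density_times_bounded_le[OF assms(2,3)]
  by (simp add: heat_flow_def)

lemma heat_flow_const: "\<sigma> \<ge> 0 \<Longrightarrow> heat_flow \<sigma> (\<lambda>_. c) x = c"
  by (simp add: heat_flow_def)

lemma heat_flow_std_normal:
  assumes "\<sigma> \<ge> 0"
  shows "heat_flow \<sigma> g x = (\<integral>z. std_normal_density z * g (x + sqrt (2 * \<sigma>) * z) \<partial>lborel)"
proof (cases "\<sigma> = 0")
  case False
  then show ?thesis
    using assms integral_normal_density_affine[of "sqrt (2 * \<sigma>)" x g] by (simp add: heat_flow_def)
qed (simp add: heat_flow_def)

lemma heat_flow_add:
  assumes "\<sigma>\<^sub>1 \<ge> 0" "\<sigma>\<^sub>2 \<ge> 0" "g \<in> borel_measurable borel" "\<forall>y. \<bar>g y\<bar> \<le> B"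
  shows "heat_flow \<sigma>\<^sub>1 (heat_flow \<sigma>\<^sub>2 g) x = heat_flow (\<sigma>\<^sub>1 + \<sigma>\<^sub>2) g x"
proof (cases "\<sigma>\<^sub>1 = 0 \<or> \<sigma>\<^sub>2 = 0")
  case True
  then show ?thesis by auto
next
  case False
  then have pos: "sqrt (2 * \<sigma>\<^sub>1) > 0" "sqrt (2 * \<sigma>\<^sub>2) > 0" "\<sigma>\<^sub>1 + \<sigma>\<^sub>2 \<noteq> 0"
    using assms(1,2) by auto
  have "(sqrt (2 * \<sigma>\<^sub>1))\<^sup>2 + (sqrt (2 * \<sigma>\<^sub>2))\<^sup>2 = 2 * (\<sigma>\<^sub>1 + \<sigma>\<^sub>2)"
    using assms(1,2) by simp
  then show ?thesis
    using False pos integral_normal_density_semigroup[OF pos(1,2) assms(3,4), of x]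
    by (simp add: heat_flow_def)
qed

lemma heat_conv_eq_heat_flow:
  assumes "integral {s..t} D \<ge> 0" "g \<in> borel_measurable borel" "\<forall>y. \<bar>g y\<bar> \<le> B"
  shows "heat_conv D d t s g x = exp (- integral {s..t} d) * heat_flow (integral {s..t} D) g x"
proof (cases "integral {s..t} D = 0")
  case True
  then show ?thesis by (simp add: heat_conv_def heat_flow_def)
next
  case False
  define \<sigma> where "\<sigma> = integral {s..t} D"
  define \<mu> where "\<mu> = integral {s..t} d"
  have \<sigma>: "\<sigma> > 0" using assms(1) False unfolding \<sigma>_def by simp
  have "heat_conv D d t s g x
      = integral UNIV (\<lambda>y. exp (-\<mu>) * (normal_density x (sqrt (2*\<sigma>)) y * g y))"
    unfolding heat_conv_def Let_def \<sigma>_def[symmetric] \<mu>_def[symmetric]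
    using \<sigma> heat_kernel_eq_normal_density[OF \<sigma>] by (simp add: mult.assoc)
  also have "\<dots> = (\<integral>y. exp (-\<mu>) * (normal_density x (sqrt (2*\<sigma>)) y * g y) \<partial>lborel)"
    using \<sigma> by (intro integral_lborel integrable_mult_right
        integrable_normal_density_times_bounded[OF assms(2,3)]) simp
  finally show ?thesis
    using \<sigma> by (simp add: heat_flow_def \<sigma>_def \<mu>_def)
qed

lemma heat_conv_cmult: "heat_conv D d t s (\<lambda>y. c * g y) x = c * heat_conv D d t s g x"
  unfolding heat_conv_def Let_def by (simp add: mult.left_commute[of _ c] integral_mult_right)

lemma heat_conv_zero [simp]: "heat_conv D d t s (\<lambda>_. 0) x = 0"
  by (simp add: heat_conv_def Let_def)

lemma heat_conv_const:
  "integral {s..t} D \<ge> 0 \<Longrightarrow> heat_conv D d t s (\<lambda>_. c) x = exp (- integral {s..t} d) * c"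
  by (simp add: heat_conv_eq_heat_flow[where B="\<bar>c\<bar>"] heat_flow_const)

lemma integral_nonneg_subinterval:
  fixes f :: "real \<Rightarrow> real"
  assumes "f integrable_on {a..b}" "\<forall>x\<in>{a..b}. f x \<ge> 0" "a \<le> c" "c \<le> e" "e \<le> b"
  shows "integral {c..e} f \<ge> 0"
  using assms by (intro integral_nonneg integrable_subinterval_real[OF assms(1)]) auto

lemma integral_nonneg_continuous:
  fixes f :: "real \<Rightarrow> real"
  shows "continuous_on UNIV f \<Longrightarrow> \<forall>x. f x \<ge> 0 \<Longrightarrow> integral {s..t} f \<ge> 0"
  by (intro integral_nonneg integrable_continuous_interval) (auto intro: continuous_on_subset)

lemma heat_conv_semigroup:
  assumes "D integrable_on {r..t}" "d integrable_on {r..t}" "\<forall>x\<in>{r..t}. D x \<ge> 0"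
    and "r \<le> s" "s \<le> t"
    and [measurable]: "g \<in> borel_measurable borel" and gB: "\<forall>y. \<bar>g y\<bar> \<le> B"
  shows "heat_conv D d t s (heat_conv D d s r g) x = heat_conv D d t r g x"
proof -
  define \<sigma>\<^sub>1 where "\<sigma>\<^sub>1 = integral {s..t} D"
  define \<sigma>\<^sub>2 where "\<sigma>\<^sub>2 = integral {r..s} D"
  define \<mu>\<^sub>1 where "\<mu>\<^sub>1 = integral {s..t} d"
  define \<mu>\<^sub>2 where "\<mu>\<^sub>2 = integral {r..s} d"
  have \<sigma>: "\<sigma>\<^sub>1 \<ge> 0" "\<sigma>\<^sub>2 \<ge> 0" "integral {r..t} D \<ge> 0"
    using integral_nonneg_subinterval[OF assms(1,3)] assms(4,5) unfolding \<sigma>\<^sub>1_def \<sigma>\<^sub>2_def by auto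
  have split: "integral {r..t} D = \<sigma>\<^sub>2 + \<sigma>\<^sub>1" "integral {r..t} d = \<mu>\<^sub>2 + \<mu>\<^sub>1"
    unfolding \<sigma>\<^sub>1_def \<sigma>\<^sub>2_def \<mu>\<^sub>1_def \<mu>\<^sub>2_def
    by (simp_all add: Henstock_Kurzweil_Integration.integral_combine[OF assms(4,5)] assms(1,2))
  have "heat_conv D d s r g = (\<lambda>y. exp (-\<mu>\<^sub>2) * heat_flow \<sigma>\<^sub>2 g y)"
    using heat_conv_eq_heat_flow[OF \<sigma>(2)[unfolded \<sigma>\<^sub>2_def] _ gB] unfolding \<sigma>\<^sub>2_def \<mu>\<^sub>2_def by auto
  then have "heat_conv D d t s (heat_conv D d s r g) x
      = exp (-\<mu>\<^sub>2) * heat_conv D d t s (heat_flow \<sigma>\<^sub>2 g) x"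
    by (simp add: heat_conv_cmult)
  also have "\<dots> = exp (-\<mu>\<^sub>2) * exp (-\<mu>\<^sub>1) * heat_flow \<sigma>\<^sub>1 (heat_flow \<sigma>\<^sub>2 g) x"
    using heat_conv_eq_heat_flow[OF \<sigma>(1)[unfolded \<sigma>\<^sub>1_def] measurable_heat_flow
        allI[OF abs_heat_flow_le[OF \<sigma>(2) _ gB]]]
    unfolding \<sigma>\<^sub>1_def \<mu>\<^sub>1_def by simp
  also have "\<dots> = exp (- integral {r..t} d) * heat_flow (integral {r..t} D) g x"
    using heat_flow_add[OF \<sigma>(1,2) _ gB] split by (simp add: exp_add[symmetric] add.commute)
  also have "\<dots> = heat_conv D d t r g x"
    using heat_conv_eq_heat_flow[OF \<sigma>(3) _ gB] by simp
  finally show ?thesis .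
qed

lemma borel_measurable_std_normal_integral_param:
  fixes k :: "real \<Rightarrow> real \<Rightarrow> real"
  assumes "continuous_on UNIV (\<lambda>(r,z). k r z)"
  shows "(\<lambda>r. \<integral>z. std_normal_density z * k r z \<partial>lborel) \<in> borel_measurable borel"
proof -
  have "sets (borel \<Otimes>\<^sub>M lborel) = sets (borel :: (real \<times> real) measure)"
    by (metis borel_prod sets_lborel sets_pair_measure_cong)
  then have [measurable]: "(\<lambda>(r,z). k r z) \<in> borel_measurable (borel \<Otimes>\<^sub>M lborel)"
    using borel_measurable_continuous_onI[OF assms] measurable_cong_sets by blast
  show ?thesis by measurable
qed

lemma borel_measurable_continuous_section:
  fixes f :: "real \<Rightarrow> real \<Rightarrow> real"
  assumes "continuous_on (S \<times> UNIV) (\<lambda>(r,y). f r y)" "r \<in> S"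
  shows "f r \<in> borel_measurable borel"
proof -
  have "continuous_on UNIV (\<lambda>y. (r, y))" by (intro continuous_intros)
  then show ?thesis
    using continuous_on_compose2[OF assms(1), of UNIV "\<lambda>y. (r, y)"] assms(2)
    by (force intro: borel_measurable_continuous_onI)
qed

lemma borel_measurable_heat_conv_param:
  fixes f :: "real \<Rightarrow> real \<Rightarrow> real"
  assumes cD: "continuous_on {a..t} D" and cd: "continuous_on {a..t} d" and D0: "\<forall>x\<in>{a..t}. D x \<ge> 0"
    and "b \<le> t"
    and cf: "continuous_on ({a..b} \<times> UNIV) (\<lambda>(r,y). f r y)"
    and fB: "\<forall>r\<in>{a..b}. \<forall>y. \<bar>f r y\<bar> \<le> M"
  shows "(\<lambda>r. heat_conv D d t r (f r) x) \<in> borel_measurable (lebesgue_on {a..b})"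
proof (cases "a \<le> b")
  case False
  then show ?thesis by (simp add: measurable_def)
next
  case True
  (* Clamping r into [a,b] gives an integrand that is jointly continuous on all of the plane. *)
  define cl where "cl r = max a (min b r)" for r
  have cl: "cl r \<in> {a..b}" for r unfolding cl_def using True by auto
  have ccl: "continuous_on UNIV cl" unfolding cl_def by (intro continuous_intros)
  have cint: "continuous_on UNIV (\<lambda>r. integral {cl r..t} g)"
    if "continuous_on {a..t} g" for g :: "real \<Rightarrow> real"
  proof -
    have "continuous_on {a..t} (\<lambda>r. integral {r..t} g)"
      by (intro indefinite_integral_continuous_1' integrable_continuous_interval that)
    moreover have "range cl \<subseteq> {a..t}" using cl \<open>b \<le> t\<close> by fastforce
    ultimately show ?thesis using continuous_on_compose2[OF _ ccl] by blast
  qed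
  define F where "F r = exp (- integral {cl r..t} d) *
      (\<integral>z. std_normal_density z * f (cl r) (x + sqrt (2 * integral {cl r..t} D) * z) \<partial>lborel)" for r
  have "continuous_on UNIV (\<lambda>(r,z). f (cl r) (x + sqrt (2 * integral {cl r..t} D) * z))"
  proof -
    have "continuous_on UNIV
        (\<lambda>q::real\<times>real. (cl (fst q), x + sqrt (2 * integral {cl (fst q)..t} D) * snd q))"
      by (intro continuous_intros continuous_on_compose2[OF ccl]
          continuous_on_compose2[OF cint[OF cD]]) auto
    then show ?thesis
      using continuous_on_compose2[OF cf] cl by (fastforce simp: case_prod_beta')
  qed
  then have "F \<in> borel_measurable borel"
    unfolding F_def[abs_def]
    by (intro borel_measurable_times borel_measurable_std_normal_integral_param
        borel_measurable_continuous_onI continuous_intros cint[OF cd])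
  then have "F \<in> borel_measurable (lebesgue_on {a..b})"
    by (metis measurable_lborel2 measurable_restrict_space1 measurable_completion)
  moreover have "F r = heat_conv D d t r (f r) x" if r: "r \<in> {a..b}" for r
  proof -
    have "integral {r..t} D \<ge> 0"
      using r \<open>b \<le> t\<close> integral_nonneg_subinterval[OF integrable_continuous_interval[OF cD] D0] by auto
    moreover have "f r \<in> borel_measurable borel" "\<forall>y. \<bar>f r y\<bar> \<le> M"
      using borel_measurable_continuous_section[OF cf r] r fB by auto
    moreover have "cl r = r" using r unfolding cl_def by auto
    ultimately show ?thesis
      unfolding F_def by (simp add: heat_conv_eq_heat_flow heat_flow_std_normal)
  qed
  ultimately show ?thesis
    using measurable_lebesgue_cong[of "{a..b}" F "\<lambda>r. heat_conv D d t r (f r) x"] by blast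
qed

lemma absolutely_integrable_heat_conv_param:
  fixes f :: "real \<Rightarrow> real \<Rightarrow> real"
  assumes cD: "continuous_on {a..t} D" and cd: "continuous_on {a..t} d" and D0: "\<forall>x\<in>{a..t}. D x \<ge> 0"
    and "b \<le> t"
    and cf: "continuous_on ({a..b} \<times> UNIV) (\<lambda>(r,y). f r y)"
    and fB: "\<forall>r\<in>{a..b}. \<forall>y. \<bar>f r y\<bar> \<le> M"
  shows "(\<lambda>r. heat_conv D d t r (f r) x) absolutely_integrable_on {a..b}"
  using borel_measurable_heat_conv_param[OF assms]
proof (rule measurable_bounded_by_integrable_imp_absolutely_integrable)
  show "(\<lambda>r. exp (- integral {r..t} d) * M) integrable_on {a..b}"
    using \<open>b \<le> t\<close> cd
    by (intro integrable_continuous_interval continuous_intros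
        continuous_on_subset[OF indefinite_integral_continuous_1'] integrable_continuous_interval) auto
  show "norm (heat_conv D d t r (f r) x) \<le> exp (- integral {r..t} d) * M" if r: "r \<in> {a..b}" for r
  proof -
    have "integral {r..t} D \<ge> 0"
      using r \<open>b \<le> t\<close> integral_nonneg_subinterval[OF integrable_continuous_interval[OF cD] D0] by auto
    moreover have "f r \<in> borel_measurable borel" "\<forall>y. \<bar>f r y\<bar> \<le> M"
      using borel_measurable_continuous_section[OF cf r] r fB by auto
    ultimately show ?thesis
      using abs_heat_flow_le heat_conv_eq_heat_flow by (simp add: abs_mult)
  qed
qed simp

section \<open>Substitution along the delay\<close>

lemma deriv_pos_image_interval:
  fixes \<theta> \<theta>' :: "real \<Rightarrow> real"
  assumes "a \<le> b"
    and \<theta>: "\<And>s. s \<in> {a..b} \<Longrightarrow> (\<theta> has_real_derivative \<theta>' s) (at s)"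
    and pos: "\<And>s. s \<in> {a..b} \<Longrightarrow> \<theta>' s > 0"
  shows "strict_mono_on {a..b} \<theta>" and "\<theta> ` {a..b} = {\<theta> a..\<theta> b}"
proof -
  show mono: "strict_mono_on {a..b} \<theta>"
    unfolding strict_mono_on_def using \<theta> pos
    by (metis (full_types) DERIV_pos_imp_increasing atLeastAtMost_iff order.trans less_imp_le)
  have "continuous_on {a..b} \<theta>"
    using \<theta> by (meson DERIV_continuous continuous_at_imp_continuous_on)
  then have "{\<theta> a..\<theta> b} \<subseteq> \<theta> ` {a..b}"
    using IVT'[of \<theta> a _ b] \<open>a \<le> b\<close> by fastforce
  moreover have "\<theta> ` {a..b} \<subseteq> {\<theta> a..\<theta> b}"
    using mono \<open>a \<le> b\<close> by (auto simp: strict_mono_on_leD)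
  ultimately show "\<theta> ` {a..b} = {\<theta> a..\<theta> b}" by blast
qed

lemma has_integral_substitution_increasing:
  fixes \<theta> \<theta>' F :: "real \<Rightarrow> real"
  assumes "a \<le> b"
    and \<theta>: "\<And>s. s \<in> {a..b} \<Longrightarrow> (\<theta> has_real_derivative \<theta>' s) (at s)"
    and pos: "\<And>s. s \<in> {a..b} \<Longrightarrow> \<theta>' s > 0"
    and F: "F absolutely_integrable_on {\<theta> a..\<theta> b}"
  shows "((\<lambda>s. \<theta>' s * F (\<theta> s)) has_integral integral {\<theta> a..\<theta> b} F) {a..b}"
proof -
  note image = deriv_pos_image_interval[OF assms(1-3)]
  have "(\<lambda>s. \<bar>\<theta>' s\<bar> * F (\<theta> s)) absolutely_integrable_on {a..b}
      \<and> integral {a..b} (\<lambda>s. \<bar>\<theta>' s\<bar> * F (\<theta> s)) = integral {\<theta> a..\<theta> b} F"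
    using has_absolute_integral_change_of_variables_1'[OF _ has_field_derivative_at_within[OF \<theta>]
        strict_mono_on_imp_inj_on[OF image(1)]] F image(2) by simp
  moreover have "\<bar>\<theta>' s\<bar> * F (\<theta> s) = \<theta>' s * F (\<theta> s)" if "s \<in> {a..b}" for s
    using pos[OF that] by simp
  ultimately show ?thesis
    by (metis (no_types, lifting) absolutely_integrable_on_def has_integral_cong has_integral_integral)
qed

lemma has_integral_heat_conv_delayed_source:
  fixes \<theta> \<theta>' :: "real \<Rightarrow> real" and f :: "real \<Rightarrow> real \<Rightarrow> real"
  assumes cD: "continuous_on {\<theta> a..t} D" and cd: "continuous_on {\<theta> a..t} d"
    and D0: "\<forall>x\<in>{\<theta> a..t}. D x \<ge> 0"
    and "a \<le> b" "b \<le> t"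
    and \<theta>: "\<And>s. s \<in> {a..b} \<Longrightarrow> (\<theta> has_real_derivative \<theta>' s) (at s)"
    and pos: "\<And>s. s \<in> {a..b} \<Longrightarrow> \<theta>' s > 0"
    and delay: "\<And>s. s \<in> {a..b} \<Longrightarrow> \<theta> s \<le> s"
    and cf: "continuous_on ({\<theta> a..\<theta> b} \<times> UNIV) (\<lambda>(r,y). f r y)"
    and fB: "\<forall>r\<in>{\<theta> a..\<theta> b}. \<forall>y. \<bar>f r y\<bar> \<le> M"
  shows "((\<lambda>s. \<theta>' s * heat_conv D d t s (heat_conv D d s (\<theta> s) (f (\<theta> s))) x)
          has_integral integral {\<theta> a..\<theta> b} (\<lambda>r. heat_conv D d t r (f r) x)) {a..b}"
proof -
  note image = deriv_pos_image_interval[OF \<open>a \<le> b\<close> \<theta> pos]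
  have "\<theta> b \<le> t" using delay[of b] \<open>a \<le> b\<close> \<open>b \<le> t\<close> by auto
  have "(\<lambda>r. heat_conv D d t r (f r) x) absolutely_integrable_on {\<theta> a..\<theta> b}"
    using \<open>\<theta> b \<le> t\<close> cf fB by (intro absolutely_integrable_heat_conv_param cD cd D0)
  then have substituted: "((\<lambda>s. \<theta>' s * heat_conv D d t (\<theta> s) (f (\<theta> s)) x)
      has_integral integral {\<theta> a..\<theta> b} (\<lambda>r. heat_conv D d t r (f r) x)) {a..b}"
    using has_integral_substitution_increasing[OF \<open>a \<le> b\<close> \<theta> pos,
        of "\<lambda>r. heat_conv D d t r (f r) x"] by simp
  have semigroup: "heat_conv D d t s (heat_conv D d s (\<theta> s) (f (\<theta> s))) x
      = heat_conv D d t (\<theta> s) (f (\<theta> s)) x"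
    if s: "s \<in> {a..b}" for s
  proof (rule heat_conv_semigroup)
    have \<theta>s: "\<theta> s \<in> {\<theta> a..\<theta> b}" using image(2) s by blast
    then have "{\<theta> s..t} \<subseteq> {\<theta> a..t}" by auto
    then show "D integrable_on {\<theta> s..t}" "d integrable_on {\<theta> s..t}" "\<forall>x\<in>{\<theta> s..t}. D x \<ge> 0"
      using D0 by (auto intro!: integrable_continuous_interval continuous_on_subset[OF cD]
          continuous_on_subset[OF cd])
    show "f (\<theta> s) \<in> borel_measurable borel" "\<forall>y. \<bar>f (\<theta> s) y\<bar> \<le> M"
      using borel_measurable_continuous_section[OF cf \<theta>s] fB \<theta>s by auto
    show "\<theta> s \<le> s" "s \<le> t" using delay[OF s] s \<open>b \<le> t\<close> by auto
  qed
  show ?thesis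
    by (rule has_integral_eq[OF _ substituted]) (simp add: semigroup)
qed

lemma has_integral_vanishing_outside:
  fixes f :: "real \<Rightarrow> real"
  assumes "(f has_integral I) {a..b}" "{a..b} \<subseteq> {c..d}"
    and "\<And>x. x \<in> {c..d} \<Longrightarrow> x \<notin> {a..b} \<Longrightarrow> f x = 0"
  shows "(f has_integral I) {c..d}"
proof -
  have "((\<lambda>x. if x \<in> {a..b} then f x else 0) has_integral I) {a..b}"
    using assms(1) by (rule has_integral_eq[rotated]) simp
  then have "((\<lambda>x. if x \<in> {a..b} then f x else 0) has_integral I) {c..d}"
    by (rule has_integral_on_superset[OF _ _ assms(2)]) auto
  then show ?thesis
    by (rule has_integral_eq[rotated]) (use assms(3) in auto)
qed

section \<open>The delayed reaction-diffusion model\<close>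

lemma C1_periodic_continuous: "C1_periodic T f \<Longrightarrow> continuous_on UNIV f"
  unfolding C1_periodic_def by (blast intro: C1_differentiable_imp_continuous_on)

lemma C1_periodic_has_deriv: "C1_periodic T f \<Longrightarrow> (f has_real_derivative deriv f s) (at s)"
  unfolding C1_periodic_def C1_differentiable_on_eq by (simp add: DERIV_deriv_iff_real_differentiable)

lemma periodic_vanishing_at_delayed_time:
  fixes p \<theta> :: "real \<Rightarrow> real"
  assumes per: "\<And>r. p (r + T) = p r"
    and zero: "\<forall>r \<in> {0..\<alpha>} \<union> {\<beta>..T}. p r = 0"
    and mono: "strict_mono \<theta>" and shift: "\<And>s. \<theta> (s + T) = \<theta> s + T" and delay: "\<And>s. \<theta> s < s"
    and "\<theta> t\<^sub>\<alpha> = \<alpha>" "\<theta> t\<^sub>\<beta> = \<beta>" "t\<^sub>\<beta> < T"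
    and s: "s \<in> {0..T}" "s \<notin> {t\<^sub>\<alpha>..t\<^sub>\<beta>}"
  shows "p (\<theta> s) = 0"
proof (cases "s < t\<^sub>\<alpha>")
  case True
  have "\<beta> - T < \<theta> 0"
    using strict_monoD[OF mono \<open>t\<^sub>\<beta> < T\<close>] shift[of 0] \<open>\<theta> t\<^sub>\<beta> = \<beta>\<close> by simp
  moreover have "\<theta> 0 \<le> \<theta> s" "\<theta> s < \<alpha>"
    using mono s True \<open>\<theta> t\<^sub>\<alpha> = \<alpha>\<close> by (auto simp: strict_mono_less_eq strict_mono_less)
  ultimately consider "\<theta> s \<in> {0..\<alpha>}" | "\<theta> s + T \<in> {\<beta>..T}" by fastforce
  then show ?thesis
    using zero per[of "\<theta> s"] by cases auto
next
  case False
  then have "\<beta> < \<theta> s" "\<theta> s < T"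
    using mono s \<open>\<theta> t\<^sub>\<beta> = \<beta>\<close> delay[of s] by (auto simp: strict_mono_less)
  then show ?thesis
    using zero by auto
qed

lemma bfun_bounded:
  fixes u :: "real \<Rightarrow> real \<Rightarrow> real"
  assumes "continuous_on UNIV p" "continuous_on UNIV h" "compact S" "\<forall>r\<in>S. \<forall>y. \<bar>u r y\<bar> \<le> B"
  obtains M where "\<forall>r\<in>S. \<forall>y. \<bar>bfun p h r (u r y)\<bar> \<le> M"
proof -
  obtain P where P: "\<forall>r\<in>S. \<bar>p r\<bar> \<le> P"
    using compact_imp_bounded[OF compact_continuous_image[OF continuous_on_subset[OF assms(1)] assms(3)]]
    by (auto simp: bounded_iff)
  obtain H where H: "\<forall>v\<in>{-B..B}. \<bar>h v\<bar> \<le> H"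
    using compact_imp_bounded[OF compact_continuous_image[OF continuous_on_subset[OF assms(2)],
          of "{-B..B}"]]
    by (auto simp: bounded_iff)
  have "\<bar>bfun p h r (u r y)\<bar> \<le> P * H" if "r \<in> S" for r y
  proof -
    have "\<bar>u r y\<bar> \<le> B" using that assms(4) by blast
    then have "u r y \<in> {-B..B}" by (simp add: abs_le_iff)
    then show ?thesis
      using that P H unfolding bfun_def abs_mult
      by (intro mult_mono) (auto intro: order_trans[OF abs_ge_zero])
  qed
  then show ?thesis by (intro that) auto
qed

lemma strict_mono_delay_map:
  fixes \<tau> :: "real \<Rightarrow> real"
  assumes "\<And>s. (\<tau> has_real_derivative deriv \<tau> s) (at s)" "\<forall>s. deriv \<tau> s < 1"
  shows "strict_mono (\<lambda>s. s - \<tau> s)"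
proof (rule strict_monoI)
  fix r s :: real assume "r < s"
  have "((\<lambda>s. s - \<tau> s) has_real_derivative 1 - deriv \<tau> x) (at x)" for x
    by (auto intro!: derivative_eq_intros assms(1))
  then show "r - \<tau> r < s - \<tau> s"
    using DERIV_pos_imp_increasing[OF \<open>r < s\<close>] assms(2) by (metis diff_gt_0_iff_gt)
qed

lemma continuous_on_bfun_comp:
  fixes u :: "real \<Rightarrow> real \<Rightarrow> real"
  assumes "continuous_on UNIV p" "continuous_on UNIV h" "continuous_on (S \<times> UNIV) (\<lambda>(r, y). u r y)"
  shows "continuous_on (S \<times> UNIV) (\<lambda>(r, y). bfun p h r (u r y))"
proof -
  have "continuous_on (S \<times> UNIV) (\<lambda>q. p (fst q) * h (u (fst q) (snd q)))"
    using assms(3) by (intro continuous_intros continuous_on_compose2[OF assms(1)]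
        continuous_on_compose2[OF assms(2)]) (auto simp: case_prod_beta)
  then show ?thesis
    unfolding bfun_def by (simp add: case_prod_beta)
qed

lemma integral_heat_conv_bfun_eq_integral_heat_conv_Rop:
  fixes T \<alpha> \<beta> t\<alpha> t\<beta> t x :: real and DI dI \<tau> p h :: "real \<Rightarrow> real" and u :: "real \<Rightarrow> real \<Rightarrow> real"
  assumes cDI: "continuous_on UNIV DI" and cdI: "continuous_on UNIV dI" and DI0: "\<forall>x. DI x \<ge> 0"
    and cp: "continuous_on UNIV p" and ch: "continuous_on UNIV h"
    and per_p: "\<And>r. p (r + T) = p r" and per_\<tau>: "\<And>r. \<tau> (r + T) = \<tau> r"
    and d\<tau>: "\<And>s. (\<tau> has_real_derivative deriv \<tau> s) (at s)"
    and \<tau>_pos: "\<forall>s. \<tau> s > 0" and d\<tau>_lt: "\<forall>s. deriv \<tau> s < 1"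
    and "0 \<le> \<alpha>" "t\<alpha> \<le> t\<beta>" "t\<beta> < T" "t\<alpha> - \<tau> t\<alpha> = \<alpha>" "t\<beta> - \<tau> t\<beta> = \<beta>"
    and p0: "\<forall>r \<in> {0..\<alpha>} \<union> {\<beta>..T}. p r = 0"
    and cu: "continuous_on ({0..} \<times> UNIV) (\<lambda>(r, y). u r y)"
    and uB: "\<forall>r\<in>{0..T}. \<forall>y. \<bar>u r y\<bar> \<le> B"
    and "T < t"
  shows "integral {0..T} (\<lambda>s. heat_conv DI dI t s (\<lambda>y. bfun p h s (u s y)) x)
       = integral {0..T} (\<lambda>s. heat_conv DI dI t s (Rop DI dI \<tau> p h s (u (s - \<tau> s))) x)"
proof -
  define \<theta> where "\<theta> s = s - \<tau> s" for s
  define f where "f r y = bfun p h r (u r y)" for r y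
  define I where "I = integral {\<alpha>..\<beta>} (\<lambda>r. heat_conv DI dI t r (f r) x)"
  have \<theta>: "\<theta> t\<alpha> = \<alpha>" "\<theta> t\<beta> = \<beta>" "\<And>s. \<theta> s < s" "\<And>s. \<theta> (s + T) = \<theta> s + T"
    using assms(14,15) \<tau>_pos per_\<tau> unfolding \<theta>_def by auto
  have window: "{\<alpha>..\<beta>} \<subseteq> {0..T}" "{t\<alpha>..t\<beta>} \<subseteq> {0..T}"
    using \<theta>(3)[of t\<alpha>] \<theta>(3)[of t\<beta>] \<theta>(1,2) \<open>0 \<le> \<alpha>\<close> \<open>t\<beta> < T\<close> by auto
  have cI: "continuous_on {\<alpha>..t} DI" "continuous_on {\<alpha>..t} dI" "\<forall>x\<in>{\<alpha>..t}. DI x \<ge> 0"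
    using DI0 by (auto intro: continuous_on_subset[OF cDI] continuous_on_subset[OF cdI])
  have cf: "continuous_on ({\<alpha>..\<beta>} \<times> UNIV) (\<lambda>(r, y). f r y)"
    unfolding f_def using \<open>0 \<le> \<alpha>\<close>
    by (intro continuous_on_bfun_comp cp ch continuous_on_subset[OF cu]) auto
  obtain M where fB: "\<forall>r\<in>{\<alpha>..\<beta>}. \<forall>y. \<bar>f r y\<bar> \<le> M"
    using bfun_bounded[OF cp ch compact_Icc, of \<alpha> \<beta> u B] uB window(1) unfolding f_def by blast
  have "(\<lambda>r. heat_conv DI dI t r (f r) x) absolutely_integrable_on {\<alpha>..\<beta>}"
    using \<theta>(2) \<theta>(3)[of t\<beta>] \<open>t\<beta> < T\<close> \<open>T < t\<close>
    by (intro absolutely_integrable_heat_conv_param[OF cI _ cf fB]) auto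
  then have "((\<lambda>r. heat_conv DI dI t r (f r) x) has_integral I) {\<alpha>..\<beta>}"
    unfolding I_def by (simp add: absolutely_integrable_on_def has_integral_integral)
  then have "((\<lambda>s. heat_conv DI dI t s (f s) x) has_integral I) {0..T}"
  proof (rule has_integral_vanishing_outside[OF _ window(1)])
    fix s assume "s \<in> {0..T}" "s \<notin> {\<alpha>..\<beta>}"
    then have "p s = 0" using p0 by auto
    then show "heat_conv DI dI t s (f s) x = 0" by (simp add: f_def[abs_def] bfun_def)
  qed
  moreover have "((\<lambda>s. heat_conv DI dI t s (Rop DI dI \<tau> p h s (u (s - \<tau> s))) x) has_integral I) {0..T}"
  proof (rule has_integral_vanishing_outside[OF _ window(2)])
    have Rop: "Rop DI dI \<tau> p h s (u (s - \<tau> s))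
        = (\<lambda>y. (1 - deriv \<tau> s) * heat_conv DI dI s (\<theta> s) (f (\<theta> s)) y)" for s
      unfolding Rop_def f_def \<theta>_def by simp
    have "((\<lambda>s. (1 - deriv \<tau> s) * heat_conv DI dI t s (heat_conv DI dI s (\<theta> s) (f (\<theta> s))) x)
        has_integral I) {t\<alpha>..t\<beta>}"
      unfolding I_def
    proof (rule has_integral_heat_conv_delayed_source[where \<theta>=\<theta> and a=t\<alpha> and b=t\<beta>, unfolded \<theta>(1,2)])
      show "(\<theta> has_real_derivative 1 - deriv \<tau> s) (at s)" for s
        unfolding \<theta>_def by (auto intro!: derivative_eq_intros d\<tau>)
    qed (use cI cf fB \<open>t\<alpha> \<le> t\<beta>\<close> \<theta>(3) d\<tau>_lt \<open>t\<beta> < T\<close> \<open>T < t\<close> in \<open>auto intro: less_imp_le\<close>)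
    then show "((\<lambda>s. heat_conv DI dI t s (Rop DI dI \<tau> p h s (u (s - \<tau> s))) x) has_integral I) {t\<alpha>..t\<beta>}"
      by (simp add: Rop heat_conv_cmult)
    show "heat_conv DI dI t s (Rop DI dI \<tau> p h s (u (s - \<tau> s))) x = 0"
      if "s \<in> {0..T}" "s \<notin> {t\<alpha>..t\<beta>}" for s
    proof -
      have "p (\<theta> s) = 0"
        using periodic_vanishing_at_delayed_time[OF per_p p0 _ \<theta>(4,3,1,2) \<open>t\<beta> < T\<close> that]
          strict_mono_delay_map[OF d\<tau> d\<tau>_lt] unfolding \<theta>_def[abs_def] by blast
      then have "f (\<theta> s) = (\<lambda>_. 0)" by (simp add: f_def bfun_def fun_eq_iff)
      then show ?thesis by (simp add: Rop heat_conv_cmult)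
    qed
  qed
  ultimately show ?thesis
    unfolding f_def[abs_def] by (simp add: integral_unique)
qed

lemma heat_conv_Rop_const:
  assumes "continuous_on UNIV DI" "\<forall>x. DI x \<ge> 0"
  shows "heat_conv DI dI t s (Rop DI dI \<tau> p h s (\<lambda>_. c)) x
       = exp (- integral {s..t} dI) * Rop DI dI \<tau> p h s (\<lambda>_. c) x"
proof -
  have "Rop DI dI \<tau> p h s (\<lambda>_. c) = (\<lambda>_. Rop DI dI \<tau> p h s (\<lambda>_. c) x)"
    using heat_conv_const[OF integral_nonneg_continuous[OF assms]] by (simp add: Rop_def fun_eq_iff)
  then show ?thesis
    using heat_conv_const[OF integral_nonneg_continuous[OF assms]] by metis
qed

theorem lemma5p2:
  fixes T \<alpha> \<beta> t\<alpha> t\<beta> :: real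
    and DM DI dM dI \<tau> p h w :: "real \<Rightarrow> real"
    and u :: "real \<Rightarrow> real \<Rightarrow> real"
  assumes "T > 0"
    and "C1_periodic T DM" and "C1_periodic T DI" and "C1_periodic T dM" and "C1_periodic T dI"
    and "C1_periodic T \<tau>" and "C1_periodic T p"
    and "\<forall>t. DM t \<ge> 0" and "\<forall>t. DI t \<ge> 0" and "\<forall>t. dM t > 0" and "\<forall>t. dI t > 0"
    and "\<forall>t. \<tau> t > 0" and "\<forall>t. deriv \<tau> t < 1" and "\<forall>t. p t \<ge> 0"
    and "h C1_differentiable_on UNIV" and "\<forall>v. h v \<ge> 0"
    and "0 < \<alpha>" and "\<alpha> \<le> \<beta>" and "\<beta> < t\<alpha>" and "t\<alpha> \<le> t\<beta>" and "t\<beta> < T"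
    and "t\<alpha> - \<tau> t\<alpha> = \<alpha>" and "t\<beta> - \<tau> t\<beta> = \<beta>"
    and "\<forall>t \<in> {0..\<alpha>} \<union> {\<beta>..T}. p t = 0"
    and "pde_solution DM dM \<tau> (Rop DI dI \<tau> p h) u"
  shows "(\<forall>t>T. \<forall>x.
            integral {0..T} (\<lambda>s. heat_conv DI dI t s (\<lambda>y. bfun p h s (u s y)) x)
          = integral {0..T} (\<lambda>s. heat_conv DI dI t s (Rop DI dI \<tau> p h s (u (s - \<tau> s))) x))
       \<and> ((\<forall>s x. u s x = w s) \<longrightarrow>
          (\<forall>t>T. \<forall>x.
            integral {0..T} (\<lambda>s. exp (- integral {s..t} dI) * bfun p h s (w s))
          = integral {0..T} (\<lambda>s. exp (- integral {s..t} dI)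
                                   * Rop DI dI \<tau> p h s (\<lambda>_. w (s - \<tau> s)) x)))"
proof -
  have cDI: "continuous_on UNIV DI" using assms(3) by (rule C1_periodic_continuous)
  obtain B where "\<forall>r\<in>{0..T}. \<forall>y. \<bar>u r y\<bar> \<le> B"
    using assms(25) unfolding pde_solution_def by blast
  then have delayed: "integral {0..T} (\<lambda>s. heat_conv DI dI t s (\<lambda>y. bfun p h s (u s y)) x)
      = integral {0..T} (\<lambda>s. heat_conv DI dI t s (Rop DI dI \<tau> p h s (u (s - \<tau> s))) x)" if "T < t" for t x
    using integral_heat_conv_bfun_eq_integral_heat_conv_Rop[OF cDI
        C1_periodic_continuous[OF assms(5)] assms(9) C1_periodic_continuous[OF assms(7)]
        C1_differentiable_imp_continuous_on[OF assms(15)] _ _ C1_periodic_has_deriv[OF assms(6)]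
        assms(12,13) _ assms(20-24)] assms(6,7,17,25) that
    by (auto simp: C1_periodic_def pde_solution_def)
  moreover have "integral {0..T} (\<lambda>s. exp (- integral {s..t} dI) * bfun p h s (w s))
      = integral {0..T} (\<lambda>s. exp (- integral {s..t} dI) * Rop DI dI \<tau> p h s (\<lambda>_. w (s - \<tau> s)) x)"
    if "\<forall>s x. u s x = w s" "T < t" for t x
  proof -
    have "u = (\<lambda>s _. w s)" using that(1) by (simp add: fun_eq_iff)
    then show ?thesis
      using delayed[OF that(2), of x] heat_conv_const[OF integral_nonneg_continuous[OF cDI assms(9)]]
        heat_conv_Rop_const[OF cDI assms(9)] by simp
  qed
  ultimately show ?thesis by blast
qed

end
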